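(* For every price $p>0$ and every ordering $\pi$ of $[n]$, \[ \mathbb{E}_{\mathbf v\sim\mathcal F}[\mathrm{Rev}(\mathbf v,p,\pi)]\ \ge\ p\Big(1-\prod_{i\in[n]}\big(1-\mathbb{E}_{v_i\sim\mathcal F_i}[y^*_i(v_i,p)]\big)\Big). \]
   Context: There are $n$ agents $[n]$ and one divisible item of size $1$. Each agent $i$ has a non-decreasing concave valuation $v_i:[0,1]\to\mathbb{R}_{\ge0}$ drawn independently from a known distribution $\mathcal F_i$; $\mathbf v\sim\mathcal F=\mathcal F_1\times\cdots\times\mathcal F_n$. For a price $p>0$, $y^*_i(v_i,p)\in[0,1]$ is a maximizer of $z\mapsto v_i(z)-pz$ over $[0,1]$ (fixed measurable selection). For an ordering $\pi$, with $B_\pi(i)$ the agents acting before $i$, agent $i$ buys $y_i(\mathbf v,p,\pi)=\min\{y^*_i(v_i,p),\max\{0,1-\sum_{j\in B_\pi(i)}y^*_j(v_j,p)\}\}$ in sequential posted pricing at price $p$ per unit, and $\mathrm{Rev}(\mathbf v,p,\pi)=p\sum_i y_i(\mathbf v,p,\pi)$. *)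

theory Defs
  imports "HOL-Probability.Probability"
begin

type_synonym valuation = "real \<Rightarrow> real"

definition admissible_val :: "valuation \<Rightarrow> bool" where
  "admissible_val v \<longleftrightarrow> mono_on {0..1} v \<and> concave_on {0..1} v \<and> (\<forall>z\<in>{0..1}. 0 \<le> v z)"

definition is_demand :: "valuation \<Rightarrow> real \<Rightarrow> real \<Rightarrow> bool" where
  "is_demand v p y \<longleftrightarrow> y \<in> {0..1} \<and> (\<forall>z\<in>{0..1}. v z - p * z \<le> v y - p * y)"

text \<open>An ordering of the agents {..<n}: pi i is the position of agent i (a bijection).
  The agents acting before i are those with smaller position.\<close>
definition before :: "nat \<Rightarrow> (nat \<Rightarrow> nat) \<Rightarrow> nat \<Rightarrow> nat set" where
  "before n \<pi> i = {j \<in> {..<n}. \<pi> j < \<pi> i}"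

text \<open>ystar i v p : the fixed selection of agent i's demand at price p.\<close>
definition alloc ::
  "nat \<Rightarrow> (nat \<Rightarrow> valuation \<Rightarrow> real \<Rightarrow> real) \<Rightarrow> (nat \<Rightarrow> valuation) \<Rightarrow> real \<Rightarrow> (nat \<Rightarrow> nat) \<Rightarrow> nat \<Rightarrow> real" where
  "alloc n ystar v p \<pi> i =
     min (ystar i (v i) p) (max 0 (1 - (\<Sum>j\<in>before n \<pi> i. ystar j (v j) p)))"

definition Rev ::
  "nat \<Rightarrow> (nat \<Rightarrow> valuation \<Rightarrow> real \<Rightarrow> real) \<Rightarrow> (nat \<Rightarrow> valuation) \<Rightarrow> real \<Rightarrow> (nat \<Rightarrow> nat) \<Rightarrow> real" where
  "Rev n ystar v p \<pi> = p * (\<Sum>i<n. alloc n ystar v p \<pi> i)"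

end

theory Submission
  imports Defs
begin

text \<open>Serving the agents in the order \<open>\<pi>\<close>, every unit that some agent demands is sold until the
  supply runs out, so the revenue is exactly \<open>p \<cdot> min 1 (\<Sum>\<^sub>i y\<^sub>i)\<close> with \<open>y\<^sub>i\<close> the demands at price
  \<open>p\<close>, whatever the order. For \<open>y\<^sub>i \<in> [0,1]\<close> one has
  \<open>min 1 (\<Sum>\<^sub>i y\<^sub>i) \<ge> 1 - \<Prod>\<^sub>i (1 - y\<^sub>i)\<close>, and since the demands are independent, the expectation of the
  right-hand side is \<open>1 - \<Prod>\<^sub>i (1 - E y\<^sub>i)\<close>.\<close>

lemma min_fill_step:
  fixes a s :: real
  assumes "0 \<le> a"
  shows "min 1 s + min a (max 0 (1 - s)) = min 1 (s + a)"
  using assms by (simp add: min_def max_def)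

lemma sum_greedy_fill:
  fixes w :: "nat \<Rightarrow> real"
  assumes "\<And>k. k < N \<Longrightarrow> 0 \<le> w k"
  shows "(\<Sum>k<N. min (w k) (max 0 (1 - (\<Sum>m<k. w m)))) = min 1 (\<Sum>k<N. w k)"
  using assms
proof (induction N)
  case 0
  then show ?case by simp
next
  case (Suc N)
  then show ?case using min_fill_step[of "w N" "\<Sum>k<N. w k"] by simp
qed

lemma before_image:
  assumes "bij_betw \<pi> {..<n} {..<n}" and "i < n"
  shows "\<pi> ` before n \<pi> i = {..<\<pi> i}"
proof
  show "\<pi> ` before n \<pi> i \<subseteq> {..<\<pi> i}"
    by (auto simp: before_def)
  show "{..<\<pi> i} \<subseteq> \<pi> ` before n \<pi> i"
  proof
    fix k assume k: "k \<in> {..<\<pi> i}"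
    have "\<pi> i < n" using assms bij_betwE by blast
    with k have k_n: "k \<in> {..<n}" by auto
    define j where "j = inv_into {..<n} \<pi> k"
    have "j \<in> {..<n}"
      using bij_betw_inv_into[OF assms(1)] k_n bij_betwE unfolding j_def by blast
    moreover have "\<pi> j = k"
      using bij_betw_inv_into_right[OF assms(1) k_n] by (simp add: j_def)
    ultimately show "k \<in> \<pi> ` before n \<pi> i"
      using k by (auto simp: before_def)
  qed
qed

lemma sum_before_reindex:
  assumes bij: "bij_betw \<pi> {..<n} {..<n}" and "i < n"
  shows "(\<Sum>j\<in>before n \<pi> i. y j) = (\<Sum>k<\<pi> i. y (inv_into {..<n} \<pi> k))"
proof -
  have inj: "inj_on \<pi> (before n \<pi> i)"
    using bij_betw_imp_inj_on[OF bij] by (rule inj_on_subset) (auto simp: before_def)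
  have "(\<Sum>k<\<pi> i. y (inv_into {..<n} \<pi> k)) = (\<Sum>j\<in>before n \<pi> i. y (inv_into {..<n} \<pi> (\<pi> j)))"
    using sum.reindex[OF inj] before_image[OF assms] by simp
  also have "\<dots> = (\<Sum>j\<in>before n \<pi> i. y j)"
    using bij_betw_imp_inj_on[OF bij] by (intro sum.cong) (auto simp: before_def)
  finally show ?thesis by simp
qed

lemma sum_sequential_fill:
  fixes y :: "nat \<Rightarrow> real"
  assumes bij: "bij_betw \<pi> {..<n} {..<n}" and nonneg: "\<And>i. i < n \<Longrightarrow> 0 \<le> y i"
  shows "(\<Sum>i<n. min (y i) (max 0 (1 - (\<Sum>j\<in>before n \<pi> i. y j)))) = min 1 (\<Sum>i<n. y i)"
proof -
  define w where "w k = y (inv_into {..<n} \<pi> k)" for k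
  have y_w: "y i = w (\<pi> i)" if "i < n" for i
    using bij_betw_imp_inj_on[OF bij] that by (simp add: w_def)
  have w_nonneg: "0 \<le> w k" if "k < n" for k
    using nonneg that bij bij_betw_inv_into bij_betwE unfolding w_def by blast
  define g where "g k = min (w k) (max 0 (1 - (\<Sum>m<k. w m)))" for k
  have "(\<Sum>i<n. min (y i) (max 0 (1 - (\<Sum>j\<in>before n \<pi> i. y j)))) = (\<Sum>i<n. g (\<pi> i))"
    by (intro sum.cong) (auto simp: g_def y_w sum_before_reindex[OF bij] w_def)
  also have "\<dots> = (\<Sum>k<n. g k)"
    by (rule sum.reindex_bij_betw[OF bij])
  also have "\<dots> = min 1 (\<Sum>k<n. w k)"
    unfolding g_def by (rule sum_greedy_fill) (rule w_nonneg)
  also have "(\<Sum>k<n. w k) = (\<Sum>i<n. y i)"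
    by (subst sum.reindex_bij_betw[OF bij, symmetric]) (simp add: y_w)
  finally show ?thesis .
qed

lemma one_minus_prod_one_minus_le_sum:
  fixes y :: "'a \<Rightarrow> real"
  assumes "finite I" and "\<And>i. i \<in> I \<Longrightarrow> 0 \<le> y i \<and> y i \<le> 1"
  shows "1 - (\<Prod>i\<in>I. 1 - y i) \<le> (\<Sum>i\<in>I. y i)"
  using assms
proof (induction I rule: finite_induct)
  case empty
  then show ?case by simp
next
  case (insert a I)
  have "0 \<le> (\<Prod>i\<in>I. 1 - y i)" "(\<Prod>i\<in>I. 1 - y i) \<le> 1"
    using insert by (auto intro!: prod_nonneg prod_le_1)
  moreover have "0 \<le> y a" "y a \<le> 1"
    using insert by auto
  ultimately have "y a * (\<Prod>i\<in>I. 1 - y i) \<le> y a"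
    by (simp add: mult_left_le)
  with insert show ?case by (simp add: algebra_simps)
qed

lemma
  fixes f :: "'i \<Rightarrow> 'a \<Rightarrow> real"
  assumes "finite I" and prob: "\<And>i. i \<in> I \<Longrightarrow> prob_space (M i)"
    and int: "\<And>i. i \<in> I \<Longrightarrow> integrable (M i) (f i)"
  shows integrable_PiM_prod: "integrable (PiM I M) (\<lambda>x. \<Prod>i\<in>I. f i (x i))"
    and integral_PiM_prod: "(\<integral>x. (\<Prod>i\<in>I. f i (x i)) \<partial>PiM I M) = (\<Prod>i\<in>I. integral\<^sup>L (M i) (f i))"
proof -
  \<comment> \<open>The product-measure locales want a probability space at every index, also outside \<open>I\<close>.\<close>
  define M' where "M' i = (if i \<in> I then M i else return (count_space UNIV) undefined)" for i
  have PiM_M_eq_PiM_M': "PiM I M = PiM I M'"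
    by (rule PiM_cong) (auto simp: M'_def)
  interpret product_prob_space M' I
    using prob by (auto simp: product_prob_space_def product_sigma_finite_def
        product_prob_space_axioms_def M'_def prob_space_return prob_space_imp_sigma_finite)
  have int': "\<And>i. i \<in> I \<Longrightarrow> integrable (M' i) (f i)"
    using int by (simp add: M'_def)
  show "integrable (PiM I M) (\<lambda>x. \<Prod>i\<in>I. f i (x i))"
    using product_integrable_prod[OF \<open>finite I\<close> int'] by (simp add: PiM_M_eq_PiM_M')
  show "(\<integral>x. (\<Prod>i\<in>I. f i (x i)) \<partial>PiM I M) = (\<Prod>i\<in>I. integral\<^sup>L (M i) (f i))"
  proof -
    have "(\<Prod>i\<in>I. integral\<^sup>L (M' i) (f i)) = (\<Prod>i\<in>I. integral\<^sup>L (M i) (f i))"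
      by (rule prod.cong) (simp_all add: M'_def)
    then show ?thesis
      using product_integral_prod[OF \<open>finite I\<close> int'] by (simp add: PiM_M_eq_PiM_M')
  qed
qed

lemma integral_min_one_sum_ge:
  fixes X :: "'i \<Rightarrow> 'a \<Rightarrow> real"
  assumes "finite I" and prob: "\<And>i. i \<in> I \<Longrightarrow> prob_space (M i)"
    and X_meas: "\<And>i. i \<in> I \<Longrightarrow> X i \<in> borel_measurable (M i)"
    and X_range: "\<And>i. i \<in> I \<Longrightarrow> AE u in M i. 0 \<le> X i u \<and> X i u \<le> 1"
  shows "1 - (\<Prod>i\<in>I. 1 - (\<integral>u. X i u \<partial>M i)) \<le> (\<integral>v. min 1 (\<Sum>i\<in>I. X i (v i)) \<partial>PiM I M)"
proof -
  interpret P: prob_space "PiM I M" by (rule prob_space_PiM[OF prob])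
  have X_int: "integrable (M i) (X i)" if "i \<in> I" for i
  proof -
    interpret prob_space "M i" by (rule prob[OF that])
    show ?thesis
      by (rule integrable_const_bound[where B=1]) (use X_range[OF that] X_meas[OF that] in auto)
  qed
  have comp_int: "integrable (M i) (\<lambda>u. 1 - X i u)" if "i \<in> I" for i
  proof -
    interpret prob_space "M i" by (rule prob[OF that])
    show ?thesis using X_int[OF that] by simp
  qed
  have comp_integral: "(\<integral>u. 1 - X i u \<partial>M i) = 1 - (\<integral>u. X i u \<partial>M i)" if "i \<in> I" for i
  proof -
    interpret prob_space "M i" by (rule prob[OF that])
    show ?thesis using X_int[OF that] by (simp add: prob_space)
  qed
  have AE_range: "AE v in PiM I M. \<forall>i\<in>I. 0 \<le> X i (v i) \<and> X i (v i) \<le> 1"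
    using \<open>finite I\<close> X_range by (intro AE_finite_allI AE_PiM_component[OF prob]) auto
  have comp_meas: "(\<lambda>v. X i (v i)) \<in> borel_measurable (PiM I M)" if "i \<in> I" for i
    using measurable_compose[OF measurable_component_singleton[OF that, of M] X_meas[OF that]] .
  have "1 - (\<Prod>i\<in>I. 1 - (\<integral>u. X i u \<partial>M i)) = (\<integral>v. 1 - (\<Prod>i\<in>I. 1 - X i (v i)) \<partial>PiM I M)"
    using integrable_PiM_prod[OF \<open>finite I\<close> prob comp_int] integral_PiM_prod[OF \<open>finite I\<close> prob comp_int]
    by (simp add: comp_integral P.prob_space)
  also have "\<dots> \<le> (\<integral>v. min 1 (\<Sum>i\<in>I. X i (v i)) \<partial>PiM I M)"
  proof (rule integral_mono_AE)
    show "integrable (PiM I M) (\<lambda>v. 1 - (\<Prod>i\<in>I. 1 - X i (v i)))"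
      using integrable_PiM_prod[OF \<open>finite I\<close> prob comp_int] by simp
    show "integrable (PiM I M) (\<lambda>v. min 1 (\<Sum>i\<in>I. X i (v i)))"
    proof (rule P.integrable_const_bound[where B=1])
      show "AE v in PiM I M. norm (min 1 (\<Sum>i\<in>I. X i (v i))) \<le> 1"
        using AE_range
      proof eventually_elim
        case (elim v)
        then have "0 \<le> (\<Sum>i\<in>I. X i (v i))" by (intro sum_nonneg) auto
        then show ?case by simp
      qed
    qed (use comp_meas in measurable)
    show "AE v in PiM I M. 1 - (\<Prod>i\<in>I. 1 - X i (v i)) \<le> min 1 (\<Sum>i\<in>I. X i (v i))"
      using AE_range
    proof eventually_elim
      case (elim v)
      then have "0 \<le> (\<Prod>i\<in>I. 1 - X i (v i))" by (intro prod_nonneg) auto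
      with elim show ?case
        using one_minus_prod_one_minus_le_sum[OF \<open>finite I\<close>, of "\<lambda>i. X i (v i)"] by simp
    qed
  qed
  finally show ?thesis .
qed

theorem mainTheorem7:
  fixes n :: nat
    and F :: "nat \<Rightarrow> valuation measure"
    and ystar :: "nat \<Rightarrow> valuation \<Rightarrow> real \<Rightarrow> real"
    and p :: real
    and \<pi> :: "nat \<Rightarrow> nat"
  assumes prob: "\<And>i. i < n \<Longrightarrow> prob_space (F i)"
    and adm: "\<And>i. i < n \<Longrightarrow> AE v in F i. admissible_val v"
    and sel: "\<And>i v q. i < n \<Longrightarrow> v \<in> space (F i) \<Longrightarrow> admissible_val v \<Longrightarrow> q > 0 \<Longrightarrow>
                 is_demand v q (ystar i v q)"
    and meas: "\<And>i q. i < n \<Longrightarrow> q > 0 \<Longrightarrow> (\<lambda>v. ystar i v q) \<in> borel_measurable (F i)"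
    and p_pos: "p > 0"
    and ord: "bij_betw \<pi> {..<n} {..<n}"
  shows "(\<integral>v. Rev n ystar v p \<pi> \<partial>(PiM {..<n} F))
           \<ge> p * (1 - (\<Prod>i<n. (1 - (\<integral>u. ystar i u p \<partial>(F i)))))"
proof -
  define y where "y i u = ystar i u p" for i u
  have y_range: "AE u in F i. 0 \<le> y i u \<and> y i u \<le> 1" if "i < n" for i
    using adm[OF that] AE_space
    by eventually_elim (use sel[OF that _ _ p_pos] in \<open>auto simp: is_demand_def y_def\<close>)
  have y_meas: "y i \<in> borel_measurable (F i)" if "i < n" for i
    using meas[OF that p_pos] by (simp add: y_def[abs_def])
  have "AE v in PiM {..<n} F. \<forall>i\<in>{..<n}. 0 \<le> y i (v i) \<and> y i (v i) \<le> 1"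
    using y_range by (intro AE_finite_allI AE_PiM_component[OF prob]) auto
  then have Rev_AE: "AE v in PiM {..<n} F. Rev n ystar v p \<pi> = p * min 1 (\<Sum>i<n. y i (v i))"
    by eventually_elim (simp add: Rev_def alloc_def sum_sequential_fill[OF ord] y_def[symmetric])
  have comp_meas: "(\<lambda>v. y i (v i)) \<in> borel_measurable (PiM {..<n} F)" if "i < n" for i
    using measurable_compose[OF measurable_component_singleton[of i "{..<n}" F] y_meas] that by simp
  have "(\<lambda>v. Rev n ystar v p \<pi>) \<in> borel_measurable (PiM {..<n} F)"
    unfolding Rev_def alloc_def y_def[symmetric]
    by (intro borel_measurable_times borel_measurable_const borel_measurable_sum borel_measurable_min
        borel_measurable_max borel_measurable_diff comp_meas) (auto simp: before_def)
  moreover have "(\<lambda>v. p * min 1 (\<Sum>i<n. y i (v i))) \<in> borel_measurable (PiM {..<n} F)"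
    using comp_meas by measurable
  ultimately have "(\<integral>v. Rev n ystar v p \<pi> \<partial>PiM {..<n} F)
      = p * (\<integral>v. min 1 (\<Sum>i<n. y i (v i)) \<partial>PiM {..<n} F)"
    using integral_cong_AE[OF _ _ Rev_AE] by simp
  also have "\<dots> \<ge> p * (1 - (\<Prod>i<n. 1 - (\<integral>u. y i u \<partial>F i)))"
    using integral_min_one_sum_ge[of "{..<n}" F y] prob y_meas y_range p_pos by simp
  finally show ?thesis by (simp add: y_def)
qed

end
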